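(* Let $G$ be a group with identity $e$, $A$ a finite set with $|A|\ge2$, $S\subseteq G$ finite with $e\in S$. Let $\mathcal P\subseteq A^S$, and let $f:\mathcal P\to A$ and $g:\mathcal P^c\to A$ be well-behaved functions such that $(\mathcal P,f)$ generates a local map $\mu:A^S\to A$ and $(\mathcal P^c,g)$ generates a local map $\mu':A^S\to A$. (1) An element $s\in S\setminus\{e\}$ is essential for $\mu$ if and only if it is essential for $\mu'$. (2) If $A=\{0,1\}$, then $\mathrm{mms}(\mu)=\mathrm{mms}(\mu')$.
   Context: $A^S$ is the set of functions $S\to A$; $\mathcal P^c=A^S\setminus\mathcal P$. For $s\in S$, $\mathrm{Res}_s(z)=z|_{S\setminus\{s\}}$. An element $s\in S$ is essential for $\mu$ if there exist $z,w\in A^S$ with $\mathrm{Res}_s(z)=\mathrm{Res}_s(w)$ but $\mu(z)\neq\mu(w)$. A pair $(\mathcal Q,h)$ generates $\mu$ if $\mathcal Q=\{z\in A^S:\mu(z)\neq z(e)\}$ and $h:\mathcal Q\to A$ is the restriction of $\mu$ to $\mathcal Q$. A function $h:\mathcal Q\to A$ is well-behaved if for all $p,q\in\mathcal Q$: $p(e)=q(e)$ iff $h(p)=h(q)$. A local map $\nu:A^S\to A$ defines the cellular automaton $\tau:A^G\to A^G$, $\tau(x)(g)=\nu((g^{-1}\cdot x)|_S)$, where $(g\cdot x)(h)=x(g^{-1}h)$; a finite $T\subseteq G$ is a memory set of $\tau$ if some local map $A^T\to A$ defines $\tau$; $\mathrm{mms}(\nu)$ is the intersection of all memory sets of the cellular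 automaton defined by $\nu$, and it equals the set of elements of $S$ essential for $\nu$. *)

theory Defs
  imports Main "HOL-Library.FuncSet"
begin

text \<open>The group G is the type 'g (class group_add, written additively but not
necessarily commutative: identity 0, product g + h, inverse - g).
A^S is the extensional function space PiE S (K A).\<close>

definition Res :: "'g set \<Rightarrow> 'g \<Rightarrow> ('g \<Rightarrow> 'a) \<Rightarrow> ('g \<Rightarrow> 'a)" where
  "Res S s z = restrict z (S - {s})"

definition essential :: "'a set \<Rightarrow> 'g set \<Rightarrow> (('g \<Rightarrow> 'a) \<Rightarrow> 'a) \<Rightarrow> 'g \<Rightarrow> bool" where
  "essential A S \<mu> s \<longleftrightarrow> s \<in> S \<and>
     (\<exists>z \<in> S \<rightarrow>\<^sub>E A. \<exists>w \<in> S \<rightarrow>\<^sub>E A. Res S s z = Res S s w \<and> \<mu> z \<noteq> \<mu> w)"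

definition generates :: "'a set \<Rightarrow> 'g::group_add set \<Rightarrow> ('g \<Rightarrow> 'a) set \<Rightarrow> (('g \<Rightarrow> 'a) \<Rightarrow> 'a)
     \<Rightarrow> (('g \<Rightarrow> 'a) \<Rightarrow> 'a) \<Rightarrow> bool" where
  "generates A S Q h \<mu> \<longleftrightarrow> Q = {z \<in> S \<rightarrow>\<^sub>E A. \<mu> z \<noteq> z 0} \<and> (\<forall>z \<in> Q. h z = \<mu> z)"

definition well_behaved :: "('g::group_add \<Rightarrow> 'a) set \<Rightarrow> (('g \<Rightarrow> 'a) \<Rightarrow> 'a) \<Rightarrow> bool" where
  "well_behaved Q h \<longleftrightarrow> (\<forall>p \<in> Q. \<forall>q \<in> Q. p 0 = q 0 \<longleftrightarrow> h p = h q)"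

text \<open>Cellular automaton defined by local map \<nu> with memory set S:
  tau(x)(g) = \<nu>((g^-1 . x)|_S), and (g^-1 . x)(h) = x(g h).\<close>
definition CA :: "'g::group_add set \<Rightarrow> (('g \<Rightarrow> 'a) \<Rightarrow> 'a) \<Rightarrow> ('g \<Rightarrow> 'a) \<Rightarrow> ('g \<Rightarrow> 'a)" where
  "CA S \<nu> x = (\<lambda>g. \<nu> (restrict (\<lambda>h. x (g + h)) S))"

definition is_memory_set :: "'a set \<Rightarrow> 'g::group_add set \<Rightarrow> (('g \<Rightarrow> 'a) \<Rightarrow> 'a) \<Rightarrow> 'g set \<Rightarrow> bool" where
  "is_memory_set A S \<nu> T \<longleftrightarrow> finite T \<and>
     (\<exists>\<nu>'. \<nu>' \<in> (T \<rightarrow>\<^sub>E A) \<rightarrow> A \<and> (\<forall>x \<in> (UNIV::'g set) \<rightarrow> A. CA T \<nu>' x = CA S \<nu> x))"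

definition mms :: "'a set \<Rightarrow> 'g::group_add set \<Rightarrow> (('g \<Rightarrow> 'a) \<Rightarrow> 'a) \<Rightarrow> 'g set" where
  "mms A S \<nu> = \<Inter> {T. is_memory_set A S \<nu> T}"

end

theory Submission
  imports Defs
begin

text \<open>Changing a coordinate s \<noteq> e never changes z(e). For such pairs, well-behavedness
  makes \<mu> z \<noteq> \<mu> w equivalent to exactly one of z, w lying in \<P>, a condition that is
  symmetric in \<P> and its complement; hence (1). If |A| = 2, then \<mu>' is \<mu> followed by the
  swap of the two letters, and post-composing a local map with a permutation of A does not
  change its memory sets; hence (2).\<close>

lemma generates_neq_iff_exactly_one_in:
  assumes "generates A S Q h \<mu>" and "well_behaved Q h"
    and "z \<in> S \<rightarrow>\<^sub>E A" and "w \<in> S \<rightarrow>\<^sub>E A" and "z 0 = w 0"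
  shows "\<mu> z \<noteq> \<mu> w \<longleftrightarrow> (z \<in> Q \<longleftrightarrow> w \<notin> Q)"
proof -
  have Q: "Q = {z \<in> S \<rightarrow>\<^sub>E A. \<mu> z \<noteq> z 0}" and h: "\<forall>z \<in> Q. h z = \<mu> z"
    using assms(1) unfolding generates_def by auto
  have "\<mu> z = \<mu> w" if "z \<in> Q" "w \<in> Q"
    using assms(2,5) that h unfolding well_behaved_def by metis
  then show ?thesis
    using Q assms(3-5) by auto
qed

lemma Res_eq_imp_eq_at:
  assumes "Res S s z = Res S s w" and "t \<in> S" and "t \<noteq> s"
  shows "z t = w t"
  using fun_cong[OF assms(1), of t] assms(2,3) unfolding Res_def by simp

lemma essential_iff_essential_complement:
  assumes "generates A S Q h \<mu>" and "well_behaved Q h"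
    and "generates A S ((S \<rightarrow>\<^sub>E A) - Q) h' \<mu>'" and "well_behaved ((S \<rightarrow>\<^sub>E A) - Q) h'"
    and "0 \<in> S" and "s \<noteq> 0"
  shows "essential A S \<mu> s \<longleftrightarrow> essential A S \<mu>' s"
proof -
  have "\<mu> z \<noteq> \<mu> w \<longleftrightarrow> \<mu>' z \<noteq> \<mu>' w"
    if z: "z \<in> S \<rightarrow>\<^sub>E A" and w: "w \<in> S \<rightarrow>\<^sub>E A" and "Res S s z = Res S s w" for z w
  proof -
    have "z 0 = w 0"
      using Res_eq_imp_eq_at[OF \<open>Res S s z = Res S s w\<close>] assms(5,6) by simp
    then show ?thesis
      using generates_neq_iff_exactly_one_in[OF assms(1,2) z w]
        generates_neq_iff_exactly_one_in[OF assms(3,4) z w] z w by auto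
  qed
  then show ?thesis
    unfolding essential_def by blast
qed

definition other :: "'a set \<Rightarrow> 'a \<Rightarrow> 'a" where
  "other A x = (THE y. y \<in> A \<and> y \<noteq> x)"

lemma other_card_2:
  assumes "card A = 2" and "x \<in> A"
  shows "other A x \<in> A" and "other A x \<noteq> x" and "\<And>y. y \<in> A \<Longrightarrow> y \<noteq> x \<Longrightarrow> y = other A x"
proof -
  obtain a b where "A = {a, b}" and "a \<noteq> b"
    using assms(1) by (meson card_2_iff)
  then have unique: "\<exists>!y. y \<in> A \<and> y \<noteq> x"
    using assms(2) by auto
  then show "other A x \<in> A" and "other A x \<noteq> x"
    unfolding other_def using theI'[OF unique] by simp_all
  show "y = other A x" if "y \<in> A" and "y \<noteq> x" for y
    unfolding other_def using the1_equality[OF unique] that by simp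
qed

lemma other_other:
  assumes "card A = 2" and "x \<in> A"
  shows "other A (other A x) = x"
  using other_card_2[OF assms(1)] assms(2) by metis

lemma generates_complement_eq_other:
  assumes "card A = 2" and "0 \<in> S"
    and "generates A S Q h \<mu>" and "generates A S ((S \<rightarrow>\<^sub>E A) - Q) h' \<mu>'"
    and "\<mu> \<in> (S \<rightarrow>\<^sub>E A) \<rightarrow> A" and "\<mu>' \<in> (S \<rightarrow>\<^sub>E A) \<rightarrow> A" and z: "z \<in> S \<rightarrow>\<^sub>E A"
  shows "\<mu>' z = other A (\<mu> z)"
proof -
  have "\<mu>' z = z 0 \<longleftrightarrow> \<mu> z \<noteq> z 0"
    using assms(3,4) z unfolding generates_def by blast
  moreover have "z 0 \<in> A" "\<mu> z \<in> A" "\<mu>' z \<in> A"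
    using assms(2,5,6) z by auto
  ultimately show ?thesis
    using other_card_2[OF assms(1)] other_other[OF assms(1)] by metis
qed

lemma is_memory_set_post_compose:
  assumes "is_memory_set A S \<nu> T" and "\<sigma> \<in> A \<rightarrow> A"
    and "\<And>z. z \<in> S \<rightarrow>\<^sub>E A \<Longrightarrow> \<nu>' z = \<sigma> (\<nu> z)"
  shows "is_memory_set A S \<nu>' T"
proof -
  obtain \<rho> where "finite T" and \<rho>: "\<rho> \<in> (T \<rightarrow>\<^sub>E A) \<rightarrow> A"
    and CA_eq: "\<forall>x \<in> UNIV \<rightarrow> A. CA T \<rho> x = CA S \<nu> x"
    using assms(1) unfolding is_memory_set_def by blast
  have "\<sigma> \<circ> \<rho> \<in> (T \<rightarrow>\<^sub>E A) \<rightarrow> A"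
    using \<rho> assms(2) by auto
  moreover have "CA T (\<sigma> \<circ> \<rho>) x = CA S \<nu>' x" if "x \<in> UNIV \<rightarrow> A" for x
  proof
    fix t
    have "restrict (\<lambda>h. x (t + h)) S \<in> S \<rightarrow>\<^sub>E A"
      using that by auto
    then show "CA T (\<sigma> \<circ> \<rho>) x t = CA S \<nu>' x t"
      using fun_cong[OF CA_eq[rule_format, OF that], of t] assms(3) unfolding CA_def by simp
  qed
  ultimately show ?thesis
    using \<open>finite T\<close> unfolding is_memory_set_def by blast
qed

lemma mms_post_compose_involution:
  assumes "\<nu> \<in> (S \<rightarrow>\<^sub>E A) \<rightarrow> A" and "\<sigma> \<in> A \<rightarrow> A" and "\<And>x. x \<in> A \<Longrightarrow> \<sigma> (\<sigma> x) = x"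
    and "\<And>z. z \<in> S \<rightarrow>\<^sub>E A \<Longrightarrow> \<nu>' z = \<sigma> (\<nu> z)"
  shows "mms A S \<nu>' = mms A S \<nu>"
proof -
  have "\<nu> z = \<sigma> (\<nu>' z)" if "z \<in> S \<rightarrow>\<^sub>E A" for z
    using that assms(1,3,4) by (simp add: funcset_mem)
  then have "is_memory_set A S \<nu>' T \<longleftrightarrow> is_memory_set A S \<nu> T" for T
    using is_memory_set_post_compose[OF _ assms(2)] assms(4) by metis
  then show ?thesis
    unfolding mms_def by presburger
qed

theorem mainTheorem7:
  fixes A :: "'a set" and S :: "'g::group_add set"
    and P :: "('g \<Rightarrow> 'a) set" and f g \<mu> \<mu>' :: "('g \<Rightarrow> 'a) \<Rightarrow> 'a"
  assumes "finite A" and "card A \<ge> 2"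
    and "finite S" and "0 \<in> S"
    and "P \<subseteq> S \<rightarrow>\<^sub>E A"
    and "f \<in> P \<rightarrow> A" and "g \<in> ((S \<rightarrow>\<^sub>E A) - P) \<rightarrow> A"
    and "well_behaved P f" and "well_behaved ((S \<rightarrow>\<^sub>E A) - P) g"
    and "\<mu> \<in> (S \<rightarrow>\<^sub>E A) \<rightarrow> A" and "\<mu>' \<in> (S \<rightarrow>\<^sub>E A) \<rightarrow> A"
    and "generates A S P f \<mu>"
    and "generates A S ((S \<rightarrow>\<^sub>E A) - P) g \<mu>'"
  shows "(\<forall>s \<in> S - {0}. essential A S \<mu> s \<longleftrightarrow> essential A S \<mu>' s)
       \<and> (card A = 2 \<longrightarrow> mms A S \<mu> = mms A S \<mu>')"
proof (intro conjI ballI impI)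
  show "essential A S \<mu> s \<longleftrightarrow> essential A S \<mu>' s" if "s \<in> S - {0}" for s
    using essential_iff_essential_complement[OF assms(12,8,13,9,4)] that by simp
next
  assume "card A = 2"
  have "\<mu>' z = other A (\<mu> z)" if "z \<in> S \<rightarrow>\<^sub>E A" for z
    using generates_complement_eq_other[OF \<open>card A = 2\<close> assms(4,12,13,10,11) that] .
  moreover have "other A \<in> A \<rightarrow> A"
    using other_card_2(1)[OF \<open>card A = 2\<close>] by blast
  ultimately have "mms A S \<mu>' = mms A S \<mu>"
    using mms_post_compose_involution[OF assms(10)] other_other[OF \<open>card A = 2\<close>] by blast
  then show "mms A S \<mu> = mms A S \<mu>'"
    by simp
qed

end
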